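(* Let $\pi$ be a projective plane of order $q$ and let $2\le n\le q$. Consider the complete bipartite graph $G=K_{n,q}$ with classes $U,V$, $|U|=n$, $|V|=q$. Then: (a) For $n=q$: $n_\pi(K_{q,q})=\binom{q^2+q+1}{2}$. (b) If $n<q$, and for every embedding $\phi$ of $K_{n,q}$ into $\pi$ the points of $\phi(V)$ lie on a line, then $n_\pi(K_{n,q})=2\binom{q^2+q+1}{2}\binom{q}{n}$. (c) If $n=q-1$, then for every embedding $\phi$ of $K_{q-1,q}$ into $\pi$ the points of $\phi(V)$ are collinear, and $n_\pi(K_{q-1,q})=q^2(q+1)(q^2+q+1)$.
   Context: A finite projective plane of order $q$ has $q^2+q+1$ points and lines, $q+1$ points on each line and $q+1$ lines through each point; any two distinct points lie on a unique line and any two lines meet in a unique point. An embedding of a simple graph $G=(V,E)$ into $\pi$ is an injective map $\phi$ from $V$ to the points of $\pi$ such that the induced map sending an edge $ab$ to the line through $\phi(a),\phi(b)$ is injective on $E$. Two embeddings $\phi,\psi$ are equivalent if $\psi=\phi\circ\alpha$ for some graph automorphism $\alpha$ of $G$; $n_\pi(G)$ is the number of equivalence classes of embeddings of $G$ into $\pi$ (equivalently, the number of distinct images, i.e. point sets $\phi(V)$ together with the line sets of embedded edges and induced incidence). *)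

theory Defs
  imports Main "HOL-Library.FuncSet"
begin

definition projective_plane :: "'p set \<Rightarrow> 'p set set \<Rightarrow> nat \<Rightarrow> bool" where
  "projective_plane P L q \<longleftrightarrow>
     finite P \<and> finite L \<and>
     card P = q^2 + q + 1 \<and> card L = q^2 + q + 1 \<and>
     (\<forall>l\<in>L. l \<subseteq> P \<and> card l = q + 1) \<and>
     (\<forall>x\<in>P. card {l\<in>L. x \<in> l} = q + 1) \<and>
     (\<forall>x\<in>P. \<forall>y\<in>P. x \<noteq> y \<longrightarrow> (\<exists>!l. l \<in> L \<and> x \<in> l \<and> y \<in> l)) \<and>
     (\<forall>l\<in>L. \<forall>m\<in>L. l \<noteq> m \<longrightarrow> (\<exists>!x. x \<in> P \<and> x \<in> l \<and> x \<in> m))"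

definition edge_line :: "'p set set \<Rightarrow> ('v \<Rightarrow> 'p) \<Rightarrow> 'v set \<Rightarrow> 'p set" where
  "edge_line L \<phi> e = (THE l. l \<in> L \<and> \<phi> ` e \<subseteq> l)"

text \<open>Simple graph: vertex set Vs, edge set E of 2-element subsets of Vs.
Embeddings are taken extensional on Vs (values outside Vs fixed to undefined).\<close>
definition embeddings :: "'p set \<Rightarrow> 'p set set \<Rightarrow> 'v set \<Rightarrow> 'v set set \<Rightarrow> ('v \<Rightarrow> 'p) set" where
  "embeddings P L Vs E =
     {\<phi> \<in> Vs \<rightarrow>\<^sub>E P. inj_on \<phi> Vs \<and> inj_on (edge_line L \<phi>) E}"

definition graph_automorphisms :: "'v set \<Rightarrow> 'v set set \<Rightarrow> ('v \<Rightarrow> 'v) set" where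
  "graph_automorphisms Vs E =
     {\<alpha>. bij_betw \<alpha> Vs Vs \<and> (\<forall>a\<in>Vs. \<forall>b\<in>Vs. {a, b} \<in> E \<longleftrightarrow> {\<alpha> a, \<alpha> b} \<in> E)}"

definition emb_equiv :: "'v set \<Rightarrow> 'v set set \<Rightarrow> (('v \<Rightarrow> 'p) \<times> ('v \<Rightarrow> 'p)) set" where
  "emb_equiv Vs E = {(\<phi>, \<psi>). \<exists>\<alpha>\<in>graph_automorphisms Vs E. \<forall>v\<in>Vs. \<psi> v = \<phi> (\<alpha> v)}"

definition n_emb :: "'p set \<Rightarrow> 'p set set \<Rightarrow> 'v set \<Rightarrow> 'v set set \<Rightarrow> nat" where
  "n_emb P L Vs E = card (embeddings P L Vs E // emb_equiv Vs E)"

definition KU :: "nat \<Rightarrow> (nat + nat) set" where "KU n = Inl ` {..<n}"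
definition KV :: "nat \<Rightarrow> (nat + nat) set" where "KV m = Inr ` {..<m}"
definition K_verts :: "nat \<Rightarrow> nat \<Rightarrow> (nat + nat) set" where
  "K_verts n m = KU n \<union> KV m"
definition K_edges :: "nat \<Rightarrow> nat \<Rightarrow> (nat + nat) set set" where
  "K_edges n m = {{u, v} | u v. u \<in> KU n \<and> v \<in> KV m}"

end

theory Submission
  imports Defs
begin

(* Up to automorphisms of K_{n,k}, which fix or swap its two classes, an embedding is determined by
   the unordered pair {A, B} of images of the classes: sets of n and k points such that the n k
   lines ab with a in A and b in B are distinct. If |B| = q, the q joins from a point a of A fill
   all but one line of the pencil at a, and every other point of A must lie on that remaining
   line l, which misses B. If B lies on a line m as well, then B = m - l and A is an arbitrary
   n-subset of l - m, which yields the counts in (a) and (b). For n = q - 1, each join of two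
   points of B passes through one of the two points of l outside A, and this forces B onto a
   line. *)

lemma two_le_cardE:
  assumes "2 \<le> card S"
  obtains x y where "x \<in> S" "y \<in> S" "x \<noteq> y"
proof -
  have "finite S"
    using assms card_gt_0_iff[of S] by simp
  then have "\<not> (\<forall>x\<in>S. \<forall>y\<in>S. x = y)"
    using card_le_Suc0_iff_eq[OF \<open>finite S\<close>] assms by simp
  then show ?thesis
    using that by blast
qed

lemma card_off_diagonal:
  assumes "finite A"
  shows "card {(x, y) \<in> A \<times> A. x \<noteq> y} = card A * (card A - 1)"
proof -
  have "{(x, y) \<in> A \<times> A. x \<noteq> y} = Sigma A (\<lambda>x. A - {x})"
    by auto
  then show ?thesis
    using assms by (simp add: card_SigmaI)
qed

lemma doubletons_eq_card_2_subsets: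
  "(\<lambda>(x, y). {x, y}) ` {(x, y) \<in> A \<times> A. x \<noteq> y} = {X. X \<subseteq> A \<and> card X = 2}"
proof (intro equalityI subsetI)
  fix X assume "X \<in> {X. X \<subseteq> A \<and> card X = 2}"
  then obtain x y where "X = {x, y}" "x \<noteq> y" "x \<in> A" "y \<in> A"
    by (auto simp: card_2_iff)
  then show "X \<in> (\<lambda>(x, y). {x, y}) ` {(x, y) \<in> A \<times> A. x \<noteq> y}"
    by force
next
  fix X assume "X \<in> (\<lambda>(x, y). {x, y}) ` {(x, y) \<in> A \<times> A. x \<noteq> y}"
  then obtain x y where "X = {x, y}" "x \<noteq> y" "x \<in> A" "y \<in> A"
    by (auto elim!: imageE)
  then show "X \<in> {X. X \<subseteq> A \<and> card X = 2}"
    by simp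
qed

lemma card_image_eq_card_image:
  assumes "\<And>x y. x \<in> A \<Longrightarrow> y \<in> A \<Longrightarrow> f x = f y \<longleftrightarrow> g x = g y"
  shows "card (f ` A) = card (g ` A)"
proof -
  define h where "h y = g (inv_into A f y)" for y
  have h: "h (f x) = g x" if "x \<in> A" for x
    using assms[of "inv_into A f (f x)" x] that by (simp add: h_def inv_into_into f_inv_into_f)
  have "g ` A = h ` f ` A"
    unfolding image_image by (rule image_cong) (simp_all add: h)
  moreover have "inj_on h (f ` A)"
  proof (rule inj_onI)
    fix y y' assume "y \<in> f ` A" "y' \<in> f ` A" "h y = h y'"
    then obtain x x' where "x \<in> A" "x' \<in> A" "y = f x" "y' = f x'" "g x = g x'"
      using h by auto
    then show "y = y'"
      using assms by blast
  qed
  ultimately show ?thesis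
    by (simp add: card_image)
qed

lemma card_quotient_eq_card_image:
  assumes "\<And>x y. x \<in> A \<Longrightarrow> y \<in> A \<Longrightarrow> R `` {x} = R `` {y} \<longleftrightarrow> f x = f y"
  shows "card (A // R) = card (f ` A)"
proof -
  have "A // R = (\<lambda>x. R `` {x}) ` A"
    unfolding quotient_def by blast
  then show ?thesis
    by (simp only:) (rule card_image_eq_card_image[OF assms])
qed

section \<open>Automorphisms of complete bipartite graphs\<close>

lemma image_nonneighbours:
  assumes "\<alpha> \<in> graph_automorphisms V E" "a \<in> V"
  shows "\<alpha> ` {b \<in> V. {a, b} \<notin> E} = {c \<in> V. {\<alpha> a, c} \<notin> E}"
proof -
  have onto: "\<alpha> ` V = V" and edges: "\<And>b. b \<in> V \<Longrightarrow> {a, b} \<in> E \<longleftrightarrow> {\<alpha> a, \<alpha> b} \<in> E"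
    using assms unfolding graph_automorphisms_def bij_betw_def by auto
  have "\<alpha> ` {b \<in> V. {a, b} \<notin> E} = \<alpha> ` {b \<in> V. {\<alpha> a, \<alpha> b} \<notin> E}"
    using edges by blast
  also have "\<dots> = {c \<in> \<alpha> ` V. {\<alpha> a, c} \<notin> E}"
    by blast
  finally show ?thesis
    by (simp only: onto)
qed

lemma KU_KV_disjoint: "KU n \<inter> KV k = {}"
  unfolding KU_def KV_def by auto

lemma card_KU [simp]: "card (KU n) = n"
  unfolding KU_def by (simp add: card_image)

lemma card_KV [simp]: "card (KV k) = k"
  unfolding KV_def by (simp add: card_image)

lemma K_edges_iff: "{a, b} \<in> K_edges n k \<longleftrightarrow> a \<in> KU n \<and> b \<in> KV k \<or> a \<in> KV k \<and> b \<in> KU n"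
  unfolding K_edges_def using KU_KV_disjoint[of n k] by (auto simp: doubleton_eq_iff)

lemma K_nonneighbours:
  assumes "a \<in> K_verts n k"
  shows "{b \<in> K_verts n k. {a, b} \<notin> K_edges n k} = (if a \<in> KU n then KU n else KV k)"
  using assms KU_KV_disjoint[of n k] unfolding K_edges_iff K_verts_def by auto

lemma K_automorphisms_iff:
  assumes "0 < n" "0 < k"
  shows "\<alpha> \<in> graph_automorphisms (K_verts n k) (K_edges n k) \<longleftrightarrow>
           bij_betw \<alpha> (K_verts n k) (K_verts n k) \<and> {\<alpha> ` KU n, \<alpha> ` KV k} = {KU n, KV k}"
proof
  assume aut: "\<alpha> \<in> graph_automorphisms (K_verts n k) (K_edges n k)"
  obtain u v where u: "u \<in> KU n" and v: "v \<in> KV k"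
    using assms unfolding KU_def KV_def by blast
  have uv: "u \<in> K_verts n k" "v \<in> K_verts n k"
    using u v unfolding K_verts_def by auto
  have bij: "bij_betw \<alpha> (K_verts n k) (K_verts n k)"
    using aut unfolding graph_automorphisms_def by blast
  \<comment> \<open>The classes are the sets of non-neighbours, which automorphisms permute.\<close>
  have "\<alpha> ` KU n = {b \<in> K_verts n k. {\<alpha> u, b} \<notin> K_edges n k}"
    using image_nonneighbours[OF aut uv(1)] K_nonneighbours[OF uv(1)] u by simp
  moreover have "v \<notin> KU n"
    using v KU_KV_disjoint[of n k] by blast
  then have "\<alpha> ` KV k = {b \<in> K_verts n k. {\<alpha> v, b} \<notin> K_edges n k}"
    using image_nonneighbours[OF aut uv(2)] K_nonneighbours[OF uv(2)] by simp
  ultimately have "\<alpha> ` KU n \<in> {KU n, KV k}" "\<alpha> ` KV k \<in> {KU n, KV k}"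
    using K_nonneighbours bij_betwE[OF bij] uv by simp_all
  moreover have "\<alpha> ` KU n \<noteq> \<alpha> ` KV k"
    using inj_on_image_mem_iff[OF bij_betw_imp_inj_on[OF bij] uv(1)] u v KU_KV_disjoint[of n k]
    unfolding K_verts_def by blast
  ultimately show "bij_betw \<alpha> (K_verts n k) (K_verts n k) \<and> {\<alpha> ` KU n, \<alpha> ` KV k} = {KU n, KV k}"
    using bij by (metis insert_commute insertE singletonD)
next
  assume "bij_betw \<alpha> (K_verts n k) (K_verts n k) \<and> {\<alpha> ` KU n, \<alpha> ` KV k} = {KU n, KV k}"
  then have bij: "bij_betw \<alpha> (K_verts n k) (K_verts n k)"
    and classes: "\<alpha> ` KU n = KU n \<and> \<alpha> ` KV k = KV k \<or> \<alpha> ` KU n = KV k \<and> \<alpha> ` KV k = KU n"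
    by (auto simp: doubleton_eq_iff)
  have "a \<in> C \<longleftrightarrow> \<alpha> a \<in> \<alpha> ` C" if "a \<in> K_verts n k" "C \<in> {KU n, KV k}" for a C
    using inj_on_image_mem_iff[OF bij_betw_imp_inj_on[OF bij] that(1)] that(2)
    unfolding K_verts_def by auto
  with classes have "{a, b} \<in> K_edges n k \<longleftrightarrow> {\<alpha> a, \<alpha> b} \<in> K_edges n k"
    if "a \<in> K_verts n k" "b \<in> K_verts n k" for a b
    using that unfolding K_edges_iff by fastforce
  with bij show "\<alpha> \<in> graph_automorphisms (K_verts n k) (K_edges n k)"
    unfolding graph_automorphisms_def by blast
qed

lemma emb_equiv_K_classes:
  assumes "0 < n" "0 < k" and inj: "inj_on \<phi> (K_verts n k)"
    and "(\<phi>, \<chi>) \<in> emb_equiv (K_verts n k) (K_edges n k)"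
  shows "inj_on \<chi> (K_verts n k)" "{\<chi> ` KU n, \<chi> ` KV k} = {\<phi> ` KU n, \<phi> ` KV k}"
proof -
  obtain \<alpha> where aut: "\<alpha> \<in> graph_automorphisms (K_verts n k) (K_edges n k)"
    and \<chi>: "\<And>v. v \<in> K_verts n k \<Longrightarrow> \<chi> v = \<phi> (\<alpha> v)"
    using assms(4) unfolding emb_equiv_def by blast
  have bij: "bij_betw \<alpha> (K_verts n k) (K_verts n k)"
    and classes: "{\<alpha> ` KU n, \<alpha> ` KV k} = {KU n, KV k}"
    using aut unfolding K_automorphisms_iff[OF assms(1,2)] by simp_all
  have "inj_on \<phi> (\<alpha> ` K_verts n k)"
    using inj bij_betw_imp_surj_on[OF bij] by simp
  then have "inj_on (\<phi> \<circ> \<alpha>) (K_verts n k)"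
    by (rule comp_inj_on[OF bij_betw_imp_inj_on[OF bij]])
  then show "inj_on \<chi> (K_verts n k)"
    using \<chi> unfolding inj_on_def by simp
  have "\<chi> ` C = \<phi> ` \<alpha> ` C" if "C \<subseteq> K_verts n k" for C
    unfolding image_image by (rule image_cong) (use \<chi> that in auto)
  then have "{\<chi> ` KU n, \<chi> ` KV k} = (\<lambda>C. \<phi> ` C) ` {\<alpha> ` KU n, \<alpha> ` KV k}"
    unfolding K_verts_def by simp
  then show "{\<chi> ` KU n, \<chi> ` KV k} = {\<phi> ` KU n, \<phi> ` KV k}"
    unfolding classes by simp
qed

lemma emb_equiv_KI:
  assumes "0 < n" "0 < k" and inj: "inj_on \<phi> (K_verts n k)" and inj\<chi>: "inj_on \<chi> (K_verts n k)"
    and images: "{\<chi> ` KU n, \<chi> ` KV k} = {\<phi> ` KU n, \<phi> ` KV k}"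
  shows "(\<phi>, \<chi>) \<in> emb_equiv (K_verts n k) (K_edges n k)"
proof -
  have same_range: "\<chi> ` K_verts n k = \<phi> ` K_verts n k"
    using arg_cong[OF images, of Union] unfolding K_verts_def by (simp add: image_Un)
  define \<alpha> where "\<alpha> = inv_into (K_verts n k) \<phi> \<circ> \<chi>"
  have "\<phi> (\<alpha> v) = \<chi> v" if "v \<in> K_verts n k" for v
    unfolding \<alpha>_def using that same_range by (metis comp_apply f_inv_into_f imageI)
  then have \<phi>\<alpha>: "\<forall>v\<in>K_verts n k. \<chi> v = \<phi> (\<alpha> v)"
    by simp
  have "{\<alpha> ` KU n, \<alpha> ` KV k} = (\<lambda>C. inv_into (K_verts n k) \<phi> ` C) ` {\<chi> ` KU n, \<chi> ` KV k}"
    by (simp add: \<alpha>_def image_comp)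
  also have "\<dots> = {KU n, KV k}"
    unfolding images using inv_into_image_cancel[OF inj] by (simp add: K_verts_def)
  finally have classes: "{\<alpha> ` KU n, \<alpha> ` KV k} = {KU n, KV k}" .
  have "\<alpha> ` K_verts n k = K_verts n k"
    using arg_cong[OF classes, of Union] unfolding K_verts_def by (simp add: image_Un)
  moreover have "inj_on (inv_into (K_verts n k) \<phi>) (\<chi> ` K_verts n k)"
    using inj_on_inv_into[of "\<chi> ` K_verts n k" \<phi>] same_range by simp
  then have "inj_on \<alpha> (K_verts n k)"
    unfolding \<alpha>_def by (rule comp_inj_on[OF inj\<chi>])
  ultimately have "\<alpha> \<in> graph_automorphisms (K_verts n k) (K_edges n k)"
    using classes K_automorphisms_iff[OF assms(1,2)] by (simp add: bij_betw_def)
  with \<phi>\<alpha> show ?thesis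
    unfolding emb_equiv_def by blast
qed

lemma emb_equiv_K_iff:
  assumes "0 < n" "0 < k" and "inj_on \<phi> (K_verts n k)"
  shows "(\<phi>, \<chi>) \<in> emb_equiv (K_verts n k) (K_edges n k) \<longleftrightarrow>
           inj_on \<chi> (K_verts n k) \<and> {\<chi> ` KU n, \<chi> ` KV k} = {\<phi> ` KU n, \<phi> ` KV k}"
proof
  assume "(\<phi>, \<chi>) \<in> emb_equiv (K_verts n k) (K_edges n k)"
  then show "inj_on \<chi> (K_verts n k) \<and> {\<chi> ` KU n, \<chi> ` KV k} = {\<phi> ` KU n, \<phi> ` KV k}"
    by (intro conjI emb_equiv_K_classes[OF assms])
qed (elim conjE, rule emb_equiv_KI[OF assms])

lemma n_emb_K_eq_card_class_images:
  assumes "0 < n" "0 < k"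
  shows "n_emb P L (K_verts n k) (K_edges n k) =
           card ((\<lambda>\<phi>. {\<phi> ` KU n, \<phi> ` KV k}) ` embeddings P L (K_verts n k) (K_edges n k))"
  unfolding n_emb_def
proof (rule card_quotient_eq_card_image)
  fix \<phi> \<psi> assume "\<phi> \<in> embeddings P L (K_verts n k) (K_edges n k)"
    "\<psi> \<in> embeddings P L (K_verts n k) (K_edges n k)"
  then have inj: "inj_on \<phi> (K_verts n k)" "inj_on \<psi> (K_verts n k)"
    by (simp_all add: embeddings_def)
  have classes: "emb_equiv (K_verts n k) (K_edges n k) `` {\<theta>} =
      {\<chi>. inj_on \<chi> (K_verts n k) \<and> {\<chi> ` KU n, \<chi> ` KV k} = {\<theta> ` KU n, \<theta> ` KV k}}"
    if "inj_on \<theta> (K_verts n k)" for \<theta>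
    using emb_equiv_K_iff[OF assms that] by (simp add: Image_singleton)
  show "emb_equiv (K_verts n k) (K_edges n k) `` {\<phi>} = emb_equiv (K_verts n k) (K_edges n k) `` {\<psi>}
        \<longleftrightarrow> {\<phi> ` KU n, \<phi> ` KV k} = {\<psi> ` KU n, \<psi> ` KV k}"
  proof
    assume eq: "emb_equiv (K_verts n k) (K_edges n k) `` {\<phi>} = emb_equiv (K_verts n k) (K_edges n k) `` {\<psi>}"
    have "\<phi> \<in> emb_equiv (K_verts n k) (K_edges n k) `` {\<psi>}"
      unfolding eq[symmetric] classes[OF inj(1)] using inj(1) by simp
    then show "{\<phi> ` KU n, \<phi> ` KV k} = {\<psi> ` KU n, \<psi> ` KV k}"
      using classes[OF inj(2)] by simp
  qed (simp add: classes inj)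
qed

section \<open>Embeddings as pairs of point sets\<close>

definition line_through :: "'p set set \<Rightarrow> 'p \<Rightarrow> 'p \<Rightarrow> 'p set" where
  "line_through L x y = (THE l. l \<in> L \<and> x \<in> l \<and> y \<in> l)"

lemma line_through_commute: "line_through L x y = line_through L y x"
  unfolding line_through_def by (simp add: conj_commute)

lemma edge_line_doubleton: "edge_line L \<phi> {u, v} = line_through L (\<phi> u) (\<phi> v)"
  unfolding edge_line_def line_through_def by simp

definition K_configs :: "'p set \<Rightarrow> 'p set set \<Rightarrow> nat \<Rightarrow> nat \<Rightarrow> ('p set \<times> 'p set) set" where
  "K_configs P L n k =
     {(A, B). A \<subseteq> P \<and> B \<subseteq> P \<and> A \<inter> B = {} \<and> card A = n \<and> card B = k \<and>
              inj_on (\<lambda>(a, b). line_through L a b) (A \<times> B)}"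

lemma K_configsD:
  assumes "(A, B) \<in> K_configs P L n k"
  shows "A \<subseteq> P" "B \<subseteq> P" "A \<inter> B = {}" "card A = n" "card B = k"
    and "\<And>a a' b b'. a \<in> A \<Longrightarrow> a' \<in> A \<Longrightarrow> b \<in> B \<Longrightarrow> b' \<in> B \<Longrightarrow>
           line_through L a b = line_through L a' b' \<Longrightarrow> a = a' \<and> b = b'"
proof -
  show "A \<subseteq> P" "B \<subseteq> P" "A \<inter> B = {}" "card A = n" "card B = k"
    using assms by (simp_all add: K_configs_def)
  show "a = a' \<and> b = b'"
    if "a \<in> A" "a' \<in> A" "b \<in> B" "b' \<in> B" "line_through L a b = line_through L a' b'" for a a' b b'
    using assms inj_onD[where f = "\<lambda>(a, b). line_through L a b" and x = "(a, b)" and y = "(a', b')"] that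
    by (simp add: K_configs_def) blast
qed

lemma K_configs_swap:
  assumes "(A, B) \<in> K_configs P L n k"
  shows "(B, A) \<in> K_configs P L k n"
  using K_configsD[OF assms] unfolding K_configs_def
  by (auto simp: inj_on_def line_through_commute)

lemma K_edges_eq_image: "K_edges n k = (\<lambda>(u, v). {u, v}) ` (KU n \<times> KV k)"
  unfolding K_edges_def by auto

lemma inj_on_K_edge: "inj_on (\<lambda>(u, v). {u, v}) (KU n \<times> KV k)"
  using KU_KV_disjoint[of n k] by (auto simp: inj_on_def doubleton_eq_iff)

lemma K_embeddings_iff:
  "\<phi> \<in> embeddings P L (K_verts n k) (K_edges n k) \<longleftrightarrow>
     \<phi> \<in> K_verts n k \<rightarrow>\<^sub>E P \<and> inj_on \<phi> (K_verts n k) \<and>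
     inj_on (\<lambda>(a, b). line_through L a b) (\<phi> ` KU n \<times> \<phi> ` KV k)"
proof -
  have "inj_on (edge_line L \<phi>) (K_edges n k) \<longleftrightarrow>
        inj_on (\<lambda>(a, b). line_through L a b) (\<phi> ` KU n \<times> \<phi> ` KV k)"
    if inj: "inj_on \<phi> (K_verts n k)"
  proof -
    have inj_prod: "inj_on (map_prod \<phi> \<phi>) (KU n \<times> KV k)"
      using inj by (intro map_prod_inj_on) (auto simp: K_verts_def intro: inj_on_subset)
    have "inj_on (edge_line L \<phi>) ((\<lambda>(u, v). {u, v}) ` (KU n \<times> KV k)) \<longleftrightarrow>
          inj_on (edge_line L \<phi> \<circ> (\<lambda>(u, v). {u, v})) (KU n \<times> KV k)"
      by (rule comp_inj_on_iff[OF inj_on_K_edge])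
    also have "edge_line L \<phi> \<circ> (\<lambda>(u, v). {u, v}) = (\<lambda>(a, b). line_through L a b) \<circ> map_prod \<phi> \<phi>"
      by (auto simp: fun_eq_iff edge_line_doubleton)
    also have "inj_on \<dots> (KU n \<times> KV k) \<longleftrightarrow>
               inj_on (\<lambda>(a, b). line_through L a b) (map_prod \<phi> \<phi> ` (KU n \<times> KV k))"
      by (rule comp_inj_on_iff[OF inj_prod, symmetric])
    finally show ?thesis
      by (simp add: K_edges_eq_image map_prod_surj_on)
  qed
  then show ?thesis
    unfolding embeddings_def by blast
qed

lemma K_embedding_images:
  assumes "\<phi> \<in> embeddings P L (K_verts n k) (K_edges n k)"
  shows "(\<phi> ` KU n, \<phi> ` KV k) \<in> K_configs P L n k"
proof -
  have sub: "KU n \<subseteq> K_verts n k" "KV k \<subseteq> K_verts n k"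
    unfolding K_verts_def by auto
  have inj: "inj_on \<phi> (K_verts n k)"
    using assms by (simp add: K_embeddings_iff)
  have "\<phi> ` KU n \<inter> \<phi> ` KV k = {}"
    using inj_on_image_Int[OF inj sub] KU_KV_disjoint by simp
  moreover have "card (\<phi> ` KU n) = n" "card (\<phi> ` KV k) = k"
    using card_image[OF inj_on_subset[OF inj sub(1)]] card_image[OF inj_on_subset[OF inj sub(2)]]
    by simp_all
  ultimately show ?thesis
    using assms sub unfolding K_configs_def K_embeddings_iff by auto
qed

lemma K_embedding_of_config:
  assumes "finite P" and config: "(A, B) \<in> K_configs P L n k"
  obtains \<phi> where "\<phi> \<in> embeddings P L (K_verts n k) (K_edges n k)" "\<phi> ` KU n = A" "\<phi> ` KV k = B"
proof -
  note AB = K_configsD[OF config]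
  obtain f where f: "bij_betw f {0..<n} A"
    using ex_bij_betw_nat_finite[of A] finite_subset[OF AB(1) assms(1)] AB(4) by auto
  obtain g where g: "bij_betw g {0..<k} B"
    using ex_bij_betw_nat_finite[of B] finite_subset[OF AB(2) assms(1)] AB(5) by auto
  define \<phi> where "\<phi> = restrict (case_sum f g) (K_verts n k)"
  have \<phi>U: "\<phi> ` KU n = A" and \<phi>V: "\<phi> ` KV k = B"
    using bij_betw_imp_surj_on[OF f] bij_betw_imp_surj_on[OF g]
    unfolding \<phi>_def K_verts_def KU_def KV_def by (auto simp: image_image atLeast0LessThan)
  have "inj_on \<phi> (KU n)" "inj_on \<phi> (KV k)"
    using bij_betw_imp_inj_on[OF f] bij_betw_imp_inj_on[OF g]
    unfolding \<phi>_def K_verts_def KU_def KV_def by (auto simp: inj_on_def atLeast0LessThan)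
  then have "inj_on \<phi> (K_verts n k)"
    using \<phi>U \<phi>V AB(3) KU_KV_disjoint[of n k]
    unfolding K_verts_def by (auto simp: inj_on_Un)
  moreover have "\<phi> \<in> K_verts n k \<rightarrow>\<^sub>E P"
    using \<phi>U \<phi>V AB(1,2) unfolding \<phi>_def K_verts_def by auto
  ultimately have "\<phi> \<in> embeddings P L (K_verts n k) (K_edges n k)"
    using config \<phi>U \<phi>V unfolding K_embeddings_iff K_configs_def by auto
  then show ?thesis
    using \<phi>U \<phi>V by (rule that)
qed

lemma K_configs_eq_image_embeddings:
  assumes "finite P"
  shows "(\<lambda>\<phi>. (\<phi> ` KU n, \<phi> ` KV k)) ` embeddings P L (K_verts n k) (K_edges n k) = K_configs P L n k"
proof (intro equalityI subsetI)
  fix C assume "C \<in> (\<lambda>\<phi>. (\<phi> ` KU n, \<phi> ` KV k)) ` embeddings P L (K_verts n k) (K_edges n k)"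
  then obtain \<phi> where "\<phi> \<in> embeddings P L (K_verts n k) (K_edges n k)" "C = (\<phi> ` KU n, \<phi> ` KV k)"
    by blast
  then show "C \<in> K_configs P L n k"
    using K_embedding_images by simp
next
  fix C assume "C \<in> K_configs P L n k"
  then obtain A B where C: "C = (A, B)" "(A, B) \<in> K_configs P L n k"
    by (cases C) auto
  obtain \<phi> where "\<phi> \<in> embeddings P L (K_verts n k) (K_edges n k)" "\<phi> ` KU n = A" "\<phi> ` KV k = B"
    by (rule K_embedding_of_config[OF assms C(2)])
  then show "C \<in> (\<lambda>\<phi>. (\<phi> ` KU n, \<phi> ` KV k)) ` embeddings P L (K_verts n k) (K_edges n k)"
    by (intro image_eqI[of _ _ \<phi>]) (simp_all add: C(1))
qed

lemma n_emb_K_eq_card_K_configs: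
  assumes "finite P" "0 < n" "0 < k"
  shows "n_emb P L (K_verts n k) (K_edges n k) = card ((\<lambda>(A, B). {A, B}) ` K_configs P L n k)"
  unfolding n_emb_K_eq_card_class_images[OF assms(2,3)]
    K_configs_eq_image_embeddings[OF assms(1), symmetric] image_image
  by simp

section \<open>Configurations in a finite projective plane\<close>

locale finite_projective_plane =
  fixes P :: "'p set" and L :: "'p set set" and q :: nat
  assumes projective_plane: "projective_plane P L q"
begin

lemma finite_points: "finite P"
  and finite_lines: "finite L"
  and card_lines: "card L = q^2 + q + 1"
  using projective_plane unfolding projective_plane_def by auto

lemma line_subset: "l \<in> L \<Longrightarrow> l \<subseteq> P"
  and card_line: "l \<in> L \<Longrightarrow> card l = q + 1"
  using projective_plane unfolding projective_plane_def by auto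

lemma finite_line: "l \<in> L \<Longrightarrow> finite l"
  using finite_subset[OF line_subset finite_points] .

lemma card_lines_through: "x \<in> P \<Longrightarrow> card {l \<in> L. x \<in> l} = q + 1"
  using projective_plane unfolding projective_plane_def by auto

lemma ex1_line: "x \<in> P \<Longrightarrow> y \<in> P \<Longrightarrow> x \<noteq> y \<Longrightarrow> \<exists>!l. l \<in> L \<and> x \<in> l \<and> y \<in> l"
  using projective_plane unfolding projective_plane_def by auto

lemma ex1_meet: "l \<in> L \<Longrightarrow> m \<in> L \<Longrightarrow> l \<noteq> m \<Longrightarrow> \<exists>!x. x \<in> P \<and> x \<in> l \<and> x \<in> m"
  using projective_plane unfolding projective_plane_def by auto

lemma line_through_incident:
  assumes "x \<in> P" "y \<in> P" "x \<noteq> y"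
  shows "line_through L x y \<in> L" "x \<in> line_through L x y" "y \<in> line_through L x y"
  using theI'[OF ex1_line[OF assms]] unfolding line_through_def by auto

lemma line_through_eq:
  assumes "l \<in> L" "x \<in> l" "y \<in> l" "x \<noteq> y"
  shows "line_through L x y = l"
proof -
  have "x \<in> P" "y \<in> P"
    using assms(1-3) line_subset by blast+
  from ex1_line[OF this assms(4)] show ?thesis
    unfolding line_through_def by (rule the1_equality) (simp add: assms)
qed

lemma line_eqI:
  assumes "l \<in> L" "m \<in> L" "S \<subseteq> l" "S \<subseteq> m" "2 \<le> card S"
  shows "l = m"
proof -
  obtain x y where "x \<in> S" "y \<in> S" "x \<noteq> y"
    using assms(5) by (rule two_le_cardE)
  then show ?thesis
    using line_through_eq[OF assms(1), of x y] line_through_eq[OF assms(2), of x y] assms(3,4) by auto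
qed

lemma card_line_diff:
  assumes "l \<in> L" "m \<in> L" "l \<noteq> m"
  shows "card (l - m) = q"
proof -
  obtain x where "x \<in> P \<and> x \<in> l \<and> x \<in> m" "\<And>y. y \<in> P \<and> y \<in> l \<and> y \<in> m \<Longrightarrow> y = x"
    using ex1_meet[OF assms] by (elim ex1E) blast
  then have "l \<inter> m = {x}"
    using line_subset[OF assms(1)] by blast
  then show ?thesis
    using card_Diff_subset_Int[of l m] finite_line[OF assms(1)] card_line[OF assms(1)] by simp
qed

lemma line_through_Int_line:
  assumes "l \<in> L" "a \<in> l" "b \<in> P" "b \<notin> l"
  shows "line_through L a b \<inter> l = {a}"
proof -
  have "a \<in> P" "a \<noteq> b"
    using assms line_subset by auto
  note g = line_through_incident[OF this(1) assms(3) this(2)]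
  have "x = a" if "x \<in> line_through L a b" "x \<in> l" for x
  proof (rule ccontr)
    assume "x \<noteq> a"
    then have "line_through L a b = l"
      using line_eqI[OF g(1) assms(1), of "{a, x}"] g(2) assms(2) that by simp
    with g(3) assms(4) show False
      by simp
  qed
  with g(2) assms(2) show ?thesis
    by blast
qed

lemma inj_on_line_through_two_lines:
  assumes "l \<in> L" "m \<in> L" "A \<subseteq> l - m" "B \<subseteq> m - l"
  shows "inj_on (\<lambda>(a, b). line_through L a b) (A \<times> B)"
proof (rule inj_onI, clarify)
  fix a b a' b' assume AB: "a \<in> A" "b \<in> B" "a' \<in> A" "b' \<in> B"
    and eq: "line_through L a b = line_through L a' b'"
  have P: "a \<in> P" "b \<in> P" "a' \<in> P" "b' \<in> P"
    using AB assms line_subset by blast+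
  have on_lines: "a \<in> l" "a' \<in> l" "b \<notin> l" "b' \<notin> l" "b \<in> m" "b' \<in> m" "a \<notin> m" "a' \<notin> m"
    using AB assms(3,4) by blast+
  have "{a} = {a'}"
    using line_through_Int_line[OF assms(1) on_lines(1) P(2) on_lines(3)]
      line_through_Int_line[OF assms(1) on_lines(2) P(4) on_lines(4)] eq by simp
  moreover have "{b} = {b'}"
    using line_through_Int_line[OF assms(2) on_lines(5) P(1) on_lines(7)]
      line_through_Int_line[OF assms(2) on_lines(6) P(3) on_lines(8)] eq
    by (simp add: line_through_commute)
  ultimately show "a = a' \<and> b = b'"
    by simp
qed

definition line_containing :: "'p set \<Rightarrow> 'p set" where
  "line_containing S = (THE l. l \<in> L \<and> S \<subseteq> l)"

lemma line_containing_eq: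
  assumes "l \<in> L" "S \<subseteq> l" "2 \<le> card S"
  shows "line_containing S = l"
  unfolding line_containing_def
proof (rule the_equality)
  show "l \<in> L \<and> S \<subseteq> l"
    using assms(1,2) ..
  show "l' = l" if "l' \<in> L \<and> S \<subseteq> l'" for l'
    using line_eqI[of l' l S] that assms by simp
qed

lemma K_configs_two_linesI:
  assumes "l \<in> L" "m \<in> L" "l \<noteq> m" "A \<subseteq> l - m" "card A = n"
  shows "(A, m - l) \<in> K_configs P L n q"
proof -
  have "A \<subseteq> P" "m - l \<subseteq> P" "A \<inter> (m - l) = {}"
    using assms(1,2,4) line_subset by blast+
  moreover have "inj_on (\<lambda>(a, b). line_through L a b) (A \<times> (m - l))"
    by (rule inj_on_line_through_two_lines[OF assms(1,2,4) subset_refl])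
  ultimately show ?thesis
    using assms(5) card_line_diff[OF assms(2,1) assms(3)[symmetric]] unfolding K_configs_def by simp
qed

lemma pencil_diff_lines_through:
  assumes "a \<in> P" "B \<subseteq> P" "a \<notin> B" "card B = q" "inj_on (line_through L a) B"
  shows "\<exists>l. {l \<in> L. a \<in> l} - line_through L a ` B = {l}"
proof -
  have sub: "line_through L a ` B \<subseteq> {l \<in> L. a \<in> l}"
    using line_through_incident[OF assms(1)] assms(2,3) by auto
  have "card (line_through L a ` B) = q"
    using card_image[OF assms(5)] assms(4) by simp
  then have "card ({l \<in> L. a \<in> l} - line_through L a ` B) = Suc 0"
    using card_Diff_subset[OF finite_subset[OF sub] sub] finite_lines card_lines_through[OF assms(1)]
    by simp
  then show ?thesis
    by (simp only: card_1_singleton_iff)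
qed

lemma K_config_ex_line_avoiding:
  assumes config: "(A, B) \<in> K_configs P L n q" and a0: "a0 \<in> A"
  shows "\<exists>l\<in>L. A \<subseteq> l \<and> l \<inter> B = {}"
proof -
  note AB = K_configsD[OF config]
  have a0P: "a0 \<in> P" and B: "\<And>b. b \<in> B \<Longrightarrow> b \<in> P \<and> a0 \<noteq> b"
    using a0 AB(1,2,3) by blast+
  have "a0 \<notin> B"
    using a0 AB(3) by blast
  moreover have "inj_on (line_through L a0) B"
    using AB(6)[OF a0 a0] by (auto intro: inj_onI)
  ultimately have "\<exists>l. {l \<in> L. a0 \<in> l} - line_through L a0 ` B = {l}"
    by (rule pencil_diff_lines_through[OF a0P AB(2) _ AB(5)])
  then obtain l where l: "{l \<in> L. a0 \<in> l} - line_through L a0 ` B = {l}" ..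
  then have "l \<in> {l \<in> L. a0 \<in> l} - line_through L a0 ` B"
    by simp
  then have l_pencil: "l \<in> L" "a0 \<in> l" and l_joins: "l \<notin> line_through L a0 ` B"
    by simp_all
  have "b \<notin> l" if "b \<in> B" for b
  proof
    assume "b \<in> l"
    then have "line_through L a0 b = l"
      using line_through_eq[OF l_pencil] B[OF that] by blast
    with l_joins that show False
      by (metis image_eqI)
  qed
  moreover have "a \<in> l" if a: "a \<in> A" "a \<noteq> a0" for a
  proof -
    have "a \<in> P"
      using a AB(1) by blast
    note g = line_through_incident[OF a0P this a(2)[symmetric]]
    have "line_through L a0 a \<noteq> line_through L a0 b" if b: "b \<in> B" for b
    proof
      assume eq: "line_through L a0 a = line_through L a0 b"
      have "b \<in> line_through L a0 a" "a \<noteq> b"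
        using eq line_through_incident(3)[OF a0P] B[OF b] a(1) b AB(3) by auto
      then have "line_through L a b = line_through L a0 b"
        using line_through_eq[OF g(1) g(3)] eq by simp
      then show False
        using AB(6)[OF a(1) a0 b b] a(2) by simp
    qed
    then have "line_through L a0 a \<in> {l \<in> L. a0 \<in> l} - line_through L a0 ` B"
      using g by auto
    then show "a \<in> l"
      using l g(3) by simp
  qed
  ultimately show ?thesis
    using l_pencil by blast
qed

lemma K_config_on_two_lines:
  assumes config: "(A, B) \<in> K_configs P L n q" and "A \<noteq> {}" "m \<in> L" "B \<subseteq> m" "2 \<le> q"
  shows "\<exists>l\<in>L. l \<noteq> m \<and> A \<subseteq> l - m \<and> B = m - l"
proof -
  note AB = K_configsD[OF config]
  obtain a0 where a0: "a0 \<in> A"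
    using assms(2) by blast
  obtain l where l: "l \<in> L" "A \<subseteq> l" "l \<inter> B = {}"
    using K_config_ex_line_avoiding[OF config a0] by blast
  obtain b b' where b: "b \<in> B" "b' \<in> B" "b \<noteq> b'"
    using AB(5) assms(5) by (metis two_le_cardE)
  have "a \<notin> m" if a: "a \<in> A" for a
  proof
    assume "a \<in> m"
    then have "line_through L a b = line_through L a b'"
      using line_through_eq[OF assms(3) \<open>a \<in> m\<close>] b assms(4) a AB(3) by (metis disjoint_iff subsetD)
    then show False
      using AB(6)[OF a a b(1) b(2)] b(3) by simp
  qed
  then have "l \<noteq> m" "A \<subseteq> l - m"
    using a0 l(2) by auto
  moreover have "B = m - l"
    using card_subset_eq[of "m - l" B] finite_line[OF assms(3)] card_line_diff[OF assms(3) l(1)]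
      \<open>l \<noteq> m\<close> AB(5) assms(4) l(3) by auto
  ultimately show ?thesis
    using l(1) by blast
qed

lemma K_config_join_meets_line_outside:
  assumes config: "(A, B) \<in> K_configs P L n k"
    and l: "l \<in> L" "A \<subseteq> l" "l \<inter> B = {}" and vw: "v \<in> B" "w \<in> B" "v \<noteq> w"
  shows "\<exists>x \<in> l - A. x \<in> line_through L v w"
proof -
  note AB = K_configsD[OF config]
  have "v \<in> P" "w \<in> P"
    using vw AB(2) by blast+
  note g = line_through_incident[OF this vw(3)]
  have "line_through L v w \<noteq> l"
    using g(2) vw(1) l(3) by blast
  then obtain x where x: "x \<in> P" "x \<in> line_through L v w" "x \<in> l"
    using ex1_meet[OF g(1) l(1)] by blast
  have "x \<noteq> v" "x \<noteq> w"
    using x(3) vw l(3) by blast+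
  have "x \<notin> A"
  proof
    assume "x \<in> A"
    have "line_through L x v = line_through L x w"
      using line_through_eq[OF g(1) x(2) g(2) \<open>x \<noteq> v\<close>]
        line_through_eq[OF g(1) x(2) g(3) \<open>x \<noteq> w\<close>] by simp
    then show False
      using AB(6)[OF \<open>x \<in> A\<close> \<open>x \<in> A\<close> vw(1,2)] vw(3) by simp
  qed
  with x show ?thesis
    by blast
qed

lemma collinear_if_joins_meet_two_points:
  assumes "B \<subseteq> P" "v0 \<in> B" "a \<in> P - B" "b \<in> P - B"
    and joins: "\<And>v w. v \<in> B \<Longrightarrow> w \<in> B \<Longrightarrow> v \<noteq> w \<Longrightarrow> \<exists>c\<in>{a, b}. c \<in> line_through L v w"
  shows "\<exists>m\<in>L. B \<subseteq> m"
proof (rule ccontr)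
  assume not_collinear: "\<not> (\<exists>m\<in>L. B \<subseteq> m)"
  have outside: "c \<in> P" "c \<notin> B" if "c \<in> {a, b}" for c
    using that assms(3,4) by auto
  have pencil: "line_through L c v0 \<in> L" "c \<in> line_through L c v0" "v0 \<in> line_through L c v0"
    if "c \<in> {a, b}" for c
    using line_through_incident[of c v0] outside[OF that] assms(1,2) by blast+
  have on_pencil: "w \<in> line_through L c v0"
    if "c \<in> {a, b}" "v \<in> B" "w \<in> B" "v \<noteq> w" "c \<in> line_through L v w" "v \<in> line_through L c v0"
    for c v w
  proof -
    have "v \<in> P" "w \<in> P"
      using that(2,3) assms(1) by blast+
    note g = line_through_incident[OF this that(4)]
    have "c \<noteq> v"
      using outside(2)[OF that(1)] that(2) by blast
    have "line_through L c v0 = line_through L c v"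
      using line_through_eq[OF pencil(1,2)[OF that(1)] that(6) \<open>c \<noteq> v\<close>] by simp
    also have "\<dots> = line_through L v w"
      using line_through_eq[OF g(1) that(5) g(2) \<open>c \<noteq> v\<close>] .
    finally show ?thesis
      using g(3) by simp
  qed
  \<comment> \<open>B is covered by the lines from v0 to a and to b, but a point on just the first and a point
    on just the second would be joined through neither a nor b.\<close>
  have cover: "w \<in> line_through L a v0 \<or> w \<in> line_through L b v0" if w: "w \<in> B" for w
  proof (cases "w = v0")
    case True
    then show ?thesis
      using pencil(3) by blast
  next
    case False
    then obtain c where "c \<in> {a, b}" "c \<in> line_through L v0 w"
      using joins[OF assms(2) w] by blast
    then show ?thesis
      using on_pencil[OF _ assms(2) w _ _ pencil(3)] False by blast
  qed
  obtain w1 where w1: "w1 \<in> B" "w1 \<notin> line_through L b v0"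
    using not_collinear pencil(1) by blast
  obtain w2 where w2: "w2 \<in> B" "w2 \<notin> line_through L a v0"
    using not_collinear pencil(1) by blast
  have w1a: "w1 \<in> line_through L a v0" and w2b: "w2 \<in> line_through L b v0"
    using cover w1 w2 by blast+
  then have "w1 \<noteq> w2"
    using w1 w2 by blast
  then obtain c where c: "c \<in> {a, b}" "c \<in> line_through L w1 w2"
    using joins[OF w1(1) w2(1)] by blast
  then consider "c = a" | "c = b"
    by blast
  then show False
  proof cases
    case 1
    then show False
      using on_pencil[OF c(1) w1(1) w2(1) \<open>w1 \<noteq> w2\<close> c(2)] w1a w2(2) by simp
  next
    case 2
    then show False
      using on_pencil[OF c(1) w2(1) w1(1) \<open>w1 \<noteq> w2\<close>[symmetric]] c(2) w2b w1(2)
      by (simp add: line_through_commute)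
  qed
qed

lemma K_config_pred_collinear:
  assumes config: "(A, B) \<in> K_configs P L (q - 1) q" and "3 \<le> q"
  shows "\<exists>m\<in>L. B \<subseteq> m"
proof -
  note AB = K_configsD[OF config]
  obtain a0 where "a0 \<in> A"
    using AB(4) assms(2) by fastforce
  then obtain l where l: "l \<in> L" "A \<subseteq> l" "l \<inter> B = {}"
    using K_config_ex_line_avoiding[OF config] by blast
  have "card (l - A) = 2"
    using card_Diff_subset[OF finite_subset[OF l(2) finite_line[OF l(1)]] l(2)]
      card_line[OF l(1)] AB(4) assms(2) by simp
  then obtain a b where ab: "l - A = {a, b}"
    by (meson card_2_iff)
  obtain v0 where "v0 \<in> B"
    using AB(5) assms(2) by fastforce
  moreover have "a \<in> P - B" "b \<in> P - B"
    using ab l line_subset by blast+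
  moreover have "\<exists>c\<in>{a, b}. c \<in> line_through L v w" if "v \<in> B" "w \<in> B" "v \<noteq> w" for v w
    using K_config_join_meets_line_outside[OF config l that] ab by blast
  ultimately show ?thesis
    using collinear_if_joins_meet_two_points[OF AB(2)] by blast
qed

lemma K_configs_square:
  assumes "2 \<le> q"
  shows "K_configs P L q q = (\<lambda>(l, m). (l - m, m - l)) ` {(l, m) \<in> L \<times> L. l \<noteq> m}"
proof (intro equalityI subsetI)
  fix C assume "C \<in> K_configs P L q q"
  then obtain A B where C: "C = (A, B)" and config: "(A, B) \<in> K_configs P L q q"
    by (cases C) auto
  note AB = K_configsD[OF config]
  have "A \<noteq> {}" "B \<noteq> {}"
    using AB(4,5) assms by auto
  then obtain m where m: "m \<in> L" "B \<subseteq> m"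
    using K_config_ex_line_avoiding[OF K_configs_swap[OF config]] by blast
  then obtain l where l: "l \<in> L" "l \<noteq> m" "A \<subseteq> l - m" "B = m - l"
    using K_config_on_two_lines[OF config \<open>A \<noteq> {}\<close> _ _ assms] by blast
  have "A = l - m"
    using card_subset_eq[OF _ l(3)] finite_line[OF l(1)] card_line_diff[OF l(1) m(1) l(2)] AB(4)
    by simp
  with C l m show "C \<in> (\<lambda>(l, m). (l - m, m - l)) ` {(l, m) \<in> L \<times> L. l \<noteq> m}"
    by auto
next
  fix C assume "C \<in> (\<lambda>(l, m). (l - m, m - l)) ` {(l, m) \<in> L \<times> L. l \<noteq> m}"
  then obtain l m where "C = (l - m, m - l)" "l \<in> L" "m \<in> L" "l \<noteq> m"
    by auto
  then show "C \<in> K_configs P L q q"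
    using K_configs_two_linesI[of l m "l - m" q] card_line_diff by simp
qed

lemma card_unordered_K_configs_square:
  assumes "2 \<le> q"
  shows "card ((\<lambda>(A, B). {A, B}) ` K_configs P L q q) = card L choose 2"
proof -
  let ?pairs = "{(l, m) \<in> L \<times> L. l \<noteq> m}"
  have lines: "{line_containing (l - m), line_containing (m - l)} = {l, m}" if "(l, m) \<in> ?pairs" for l m
  proof -
    have "l \<in> L" "m \<in> L" "l \<noteq> m"
      using that by auto
    then have "line_containing (l - m) = l" "line_containing (m - l) = m"
      using line_containing_eq[OF _ Diff_subset] card_line_diff assms by simp_all
    then show ?thesis
      by simp
  qed
  have "card ((\<lambda>(A, B). {A, B}) ` K_configs P L q q) = card ((\<lambda>(l, m). {l - m, m - l}) ` ?pairs)"
    unfolding K_configs_square[OF assms] image_image by (simp add: case_prod_beta)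
  also have "\<dots> = card ((\<lambda>(l, m). {l, m}) ` ?pairs)"
  proof (rule card_image_eq_card_image)
    fix x y assume "x \<in> ?pairs" "y \<in> ?pairs"
    then obtain l m l' m' where x: "x = (l, m)" "(l, m) \<in> ?pairs" and y: "y = (l', m')" "(l', m') \<in> ?pairs"
      by auto
    have "{l - m, m - l} = {l' - m', m' - l'} \<longleftrightarrow> {l, m} = {l', m'}"
    proof
      assume "{l - m, m - l} = {l' - m', m' - l'}"
      then have "line_containing ` {l - m, m - l} = line_containing ` {l' - m', m' - l'}"
        by (rule arg_cong)
      then show "{l, m} = {l', m'}"
        using lines[OF x(2)] lines[OF y(2)] by simp
    next
      assume "{l, m} = {l', m'}"
      then have "l = l' \<and> m = m' \<or> l = m' \<and> m = l'"
        by (simp add: doubleton_eq_iff)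
      then show "{l - m, m - l} = {l' - m', m' - l'}"
        by (elim disjE) (simp_all add: insert_commute)
    qed
    with x y show "(\<lambda>(l, m). {l - m, m - l}) x = (\<lambda>(l, m). {l - m, m - l}) y \<longleftrightarrow>
                   (\<lambda>(l, m). {l, m}) x = (\<lambda>(l, m). {l, m}) y"
      by simp
  qed
  also have "\<dots> = card L choose 2"
    unfolding doubletons_eq_card_2_subsets n_subsets[OF finite_lines] ..
  finally show ?thesis .
qed

lemma K_configs_collinear:
  assumes "2 \<le> n" "n < q" and collinear: "\<forall>(A, B) \<in> K_configs P L n q. \<exists>m\<in>L. B \<subseteq> m"
  shows "K_configs P L n q = (\<lambda>((l, m), A). (A, m - l)) `
           Sigma {(l, m) \<in> L \<times> L. l \<noteq> m} (\<lambda>(l, m). {A. A \<subseteq> l - m \<and> card A = n})"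
proof (intro equalityI subsetI)
  fix C assume "C \<in> K_configs P L n q"
  then obtain A B where C: "C = (A, B)" and config: "(A, B) \<in> K_configs P L n q"
    by (cases C) auto
  obtain m where m: "m \<in> L" "B \<subseteq> m"
    using collinear config by blast
  have "A \<noteq> {}"
    using K_configsD(4)[OF config] assms(1) by auto
  then obtain l where "l \<in> L" "l \<noteq> m" "A \<subseteq> l - m" "B = m - l"
    using K_config_on_two_lines[OF config _ m] assms(1,2) by auto
  with C m K_configsD(4)[OF config]
  show "C \<in> (\<lambda>((l, m), A). (A, m - l)) ` Sigma {(l, m) \<in> L \<times> L. l \<noteq> m} (\<lambda>(l, m). {A. A \<subseteq> l - m \<and> card A = n})"
    by (auto intro!: image_eqI[of _ _ "((l, m), A)"])
next
  fix C assume "C \<in> (\<lambda>((l, m), A). (A, m - l)) ` Sigma {(l, m) \<in> L \<times> L. l \<noteq> m} (\<lambda>(l, m). {A. A \<subseteq> l - m \<and> card A = n})"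
  then obtain l m A where "C = (A, m - l)" "l \<in> L" "m \<in> L" "l \<noteq> m" "A \<subseteq> l - m" "card A = n"
    by (auto elim!: imageE)
  then show "C \<in> K_configs P L n q"
    using K_configs_two_linesI by simp
qed

lemma card_K_configs_collinear:
  assumes "2 \<le> n" "n < q" and collinear: "\<forall>(A, B) \<in> K_configs P L n q. \<exists>m\<in>L. B \<subseteq> m"
  shows "card (K_configs P L n q) = card L * (card L - 1) * (q choose n)"
proof -
  let ?pairs = "{(l, m) \<in> L \<times> L. l \<noteq> m}"
  let ?subsets = "\<lambda>(l, m). {A. A \<subseteq> l - m \<and> card A = n}"
  have "inj_on (\<lambda>((l, m), A). (A, m - l)) (Sigma ?pairs ?subsets)"
  proof (rule inj_on_inverseI)
    fix x assume "x \<in> Sigma ?pairs ?subsets"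
    then obtain l m A where x: "x = ((l, m), A)" "l \<in> L" "m \<in> L" "l \<noteq> m" "A \<subseteq> l - m" "card A = n"
      by auto
    then have "line_containing A = l" "line_containing (m - l) = m"
      using line_containing_eq[of l A] line_containing_eq[of m "m - l"] card_line_diff[of m l] assms(1,2)
      by auto
    then show "(\<lambda>(A, B). ((line_containing A, line_containing B), A)) ((\<lambda>((l, m), A). (A, m - l)) x) = x"
      using x(1) by simp
  qed
  then have "card (K_configs P L n q) = card (Sigma ?pairs ?subsets)"
    unfolding K_configs_collinear[OF assms] by (rule card_image)
  also have "\<dots> = (\<Sum>p\<in>?pairs. card (?subsets p))"
  proof (rule card_SigmaI)
    show "finite ?pairs"
      by (rule finite_subset[of _ "L \<times> L"]) (auto simp: finite_lines)
    show "\<forall>p\<in>?pairs. finite (?subsets p)"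
      using finite_line by (auto intro: finite_subset[of _ "Pow (_ - _)"])
  qed
  also have "\<dots> = (\<Sum>p\<in>?pairs. q choose n)"
  proof (rule sum.cong[OF refl])
    fix p assume "p \<in> ?pairs"
    then obtain l m where "p = (l, m)" "l \<in> L" "m \<in> L" "l \<noteq> m"
      by auto
    then show "card (?subsets p) = q choose n"
      using n_subsets[of "l - m" n] finite_line card_line_diff by simp
  qed
  also have "\<dots> = card L * (card L - 1) * (q choose n)"
    using card_off_diagonal[OF finite_lines] by simp
  finally show ?thesis .
qed

lemma card_unordered_K_configs_collinear:
  assumes "2 \<le> n" "n < q" and "\<forall>(A, B) \<in> K_configs P L n q. \<exists>m\<in>L. B \<subseteq> m"
  shows "card ((\<lambda>(A, B). {A, B}) ` K_configs P L n q) = card L * (card L - 1) * (q choose n)"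
proof -
  have "inj_on (\<lambda>(A, B). {A, B}) (K_configs P L n q)"
  proof (rule inj_onI, clarify)
    fix A B A' B' assume "(A, B) \<in> K_configs P L n q" "(A', B') \<in> K_configs P L n q" "{A, B} = {A', B'}"
    then show "A = A' \<and> B = B'"
      using K_configsD(4,5) assms(2) by (metis doubleton_eq_iff less_irrefl)
  qed
  then show ?thesis
    using card_image card_K_configs_collinear[OF assms] by fastforce
qed

end

theorem theorem3p5:
  fixes P :: "'p set" and L :: "'p set set" and q n :: nat
  assumes "projective_plane P L q" and "2 \<le> n" and "n \<le> q"
  shows "(n = q \<longrightarrow>
            n_emb P L (K_verts q q) (K_edges q q) = (q^2 + q + 1) choose 2)
       \<and> ((n < q \<and> (\<forall>\<phi>\<in>embeddings P L (K_verts n q) (K_edges n q). \<exists>l\<in>L. \<phi> ` KV q \<subseteq> l)) \<longrightarrow>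
            n_emb P L (K_verts n q) (K_edges n q) = 2 * ((q^2 + q + 1) choose 2) * (q choose n))
       \<and> (n = q - 1 \<longrightarrow>
            (\<forall>\<phi>\<in>embeddings P L (K_verts n q) (K_edges n q). \<exists>l\<in>L. \<phi> ` KV q \<subseteq> l)
          \<and> n_emb P L (K_verts n q) (K_edges n q) = q^2 * (q + 1) * (q^2 + q + 1))"
proof -
  interpret finite_projective_plane P L q
    by (rule finite_projective_plane.intro) (fact assms(1))
  have q: "2 \<le> q"
    using assms by simp
  have n_emb: "n_emb P L (K_verts k q) (K_edges k q) = card ((\<lambda>(A, B). {A, B}) ` K_configs P L k q)"
    if "2 \<le> k" for k
    using n_emb_K_eq_card_K_configs[OF finite_points] that q by simp
  have collinear_iff: "(\<forall>\<phi>\<in>embeddings P L (K_verts k q) (K_edges k q). \<exists>l\<in>L. \<phi> ` KV q \<subseteq> l) \<longleftrightarrow>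
                       (\<forall>(A, B)\<in>K_configs P L k q. \<exists>l\<in>L. B \<subseteq> l)" for k
    unfolding K_configs_eq_image_embeddings[OF finite_points, symmetric] by auto
  have two_choose: "2 * (card L choose 2) = card L * (card L - 1)"
    using times_binomial_minus1_eq[of 2 "card L"] by simp
  have part_b: "n_emb P L (K_verts n q) (K_edges n q) = 2 * ((q^2 + q + 1) choose 2) * (q choose n)"
    if "n < q" "\<forall>\<phi>\<in>embeddings P L (K_verts n q) (K_edges n q). \<exists>l\<in>L. \<phi> ` KV q \<subseteq> l"
    using card_unordered_K_configs_collinear[OF assms(2) that(1)] that(2) collinear_iff
      n_emb[OF assms(2)] two_choose card_lines by simp
  have part_c: "\<forall>\<phi>\<in>embeddings P L (K_verts n q) (K_edges n q). \<exists>l\<in>L. \<phi> ` KV q \<subseteq> l" if "n = q - 1"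
    using K_config_pred_collinear that assms(2) collinear_iff by auto
  have "q choose (q - 1) = q"
    using binomial_symmetric[of "q - 1" q] q by simp
  moreover have "2 * ((q^2 + q + 1) choose 2) = (q^2 + q + 1) * (q^2 + q)"
    using two_choose card_lines by simp
  ultimately have "2 * ((q^2 + q + 1) choose 2) * (q choose (q - 1)) = q^2 * (q + 1) * (q^2 + q + 1)"
    by (simp add: power2_eq_square algebra_simps)
  then show ?thesis
    using n_emb[OF q] card_unordered_K_configs_square[OF q] card_lines part_b part_c assms(2) by auto
qed

end
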